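(* Let $p\geq 5$ be a prime. Then $$ \sum_{\substack{1\leq j<k\leq p-1\\ k \text{ even}}}\frac{1}{jk^2}\equiv\frac{5}{8}B_{p-3}\pmod{p} $$ and $$ \sum_{\substack{1\leq j<k\leq p-1\\ k\text{ even}}}\frac{1}{j^2k}\equiv-\frac{3}{8}B_{p-3}\pmod{p}. $$
   Context: $B_n$ denotes the $n$-th Bernoulli number, defined by $\frac{t}{e^t-1}=\sum_{n=0}^{\infty}\frac{B_n}{n!}t^n$. The sums range over pairs of integers $(j,k)$ with $1\le j<k\le p-1$ and $k$ even. Congruences between rational numbers are understood for rationals whose denominators are coprime to $p$: $x\equiv y\pmod{p}$ means $x-y=p r$ with $r$ a rational number whose denominator is not divisible by $p$. *)

theory Defs
  imports Complex_Main "HOL-Computational_Algebra.Primes"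
begin

text \<open>Bernoulli numbers via the standard recurrence equivalent to
  the generating function t/(e^t-1): B_0 = 1 and for n > 0,
  sum over k from 0 to n of (n+1 choose k) B_k = 0.\<close>
fun bernoulli :: "nat \<Rightarrow> rat" where
  "bernoulli n = (if n = 0 then 1 else
     - (\<Sum>k<n. of_nat ((n + 1) choose k) * bernoulli k) / of_nat (n + 1))"

declare bernoulli.simps [simp del]

definition rat_cong :: "rat \<Rightarrow> rat \<Rightarrow> nat \<Rightarrow> bool" where
  "rat_cong x y p \<longleftrightarrow>
     (\<exists>r. x - y = of_nat p * r \<and> \<not> int p dvd snd (quotient_of r))"

end

theory Submission
  imports Defs "HOL-Number_Theory.Residues"
begin

(* Write p = 2h + 1, H_n(a) for the sum of 1/k^a over 1 <= k <= n, H_n(a,b) for the sum of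
   1/(j^a k^b) over 1 <= j < k <= n, and Q = H_h(3). The sums in the theorem are the even-k
   parts E(a,b) of H_{p-1}(a,b) for (a,b) = (1,2), (2,1).

   The reflection k -> p - k exchanges odd and even k. Since H_{p-1}(a) = 0 (mod p) (Fermat
   turns it into a power sum, which Faulhaber's formula shows to be divisible by p), the term
   H_{k-1}(a)/k^b at p - k is congruent to the term at k plus 1/k^(a+b) when a + b is odd.
   Hence 2 E(a,b) = H_{p-1}(a,b) - Q/8 (mod p).

   For the full sums, 1/k^2 = -1/(k(p-k)) (mod p) and partial fractions give
   H_{p-1}(1,2) = -3 H_{p-1}(1,1)/p, and H_{p-1}(1)^2 = H_{p-1}(2) + 2 H_{p-1}(1,1) reduces this
   to H_{p-1}(2)/p; the stuffle relation H(1) H(2) = H(1,2) + H(2,1) + H(3) then gives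
   H_{p-1}(2,1). Both H_{p-1}(2) = -pQ/3 (mod p^2) and Q = -2 B_{p-3} (mod p) come from the same
   doubling argument: split the sum of f(k) over 1 <= k < p once into halves and once by parity,
   with f(k) = 1/k^2 resp. f(k) = k^(p-3), and expand f(p - k) modulo p^2. For k^(p-3) the total
   sum is p B_{p-3} (mod p^2) by Faulhaber's formula. *)

section \<open>Bernoulli numbers and sums of powers\<close>

lemma bernoulli_0 [simp]: "bernoulli 0 = 1"
  by (simp add: bernoulli.simps)

lemma sum_binomial_bernoulli:
  "(\<Sum>k\<le>n. of_nat (n choose k) * bernoulli k) = bernoulli n + (if n = 1 then 1 else 0)"
proof (cases "n \<le> 1")
  case True
  then have "n = 0 \<or> n = 1" by auto
  then show ?thesis by (auto simp: bernoulli.simps[of 1])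
next
  case False
  then obtain m where n: "n = Suc m" and "m \<noteq> 0" by (cases n) auto
  then have "(\<Sum>k<m. of_nat (n choose k) * bernoulli k) = - of_nat n * bernoulli m"
    by (subst bernoulli.simps[of m]) (simp add: field_simps del: of_nat_Suc)
  then show ?thesis
    using n \<open>m \<noteq> 0\<close> by (simp add: lessThan_Suc_atMost[symmetric] del: of_nat_Suc)
qed

lemma binomial_mult_swap:
  assumes "k + i \<le> n"
  shows "(n choose k) * ((n - k) choose i) = (n choose i) * ((n - i) choose k)"
proof -
  have "(n choose (k + i)) * ((k + i) choose k) = (n choose k) * ((n - k) choose i)"
    "(n choose (k + i)) * ((k + i) choose i) = (n choose i) * ((n - i) choose k)"
    using assms choose_mult[of k "k + i" n] choose_mult[of i "k + i" n] by simp_all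
  moreover have "(k + i) choose k = (k + i) choose i"
    using binomial_symmetric[of k "k + i"] by simp
  ultimately show ?thesis by simp
qed

definition bernpoly :: "nat \<Rightarrow> rat \<Rightarrow> rat" where
  "bernpoly n x = (\<Sum>k\<le>n. of_nat (n choose k) * bernoulli k * x ^ (n - k))"

lemma bernpoly_0 [simp]: "bernpoly n 0 = bernoulli n"
proof -
  have "bernpoly n 0 = (\<Sum>k\<le>n. if k = n then bernoulli n else 0)"
    unfolding bernpoly_def by (rule sum.cong) auto
  then show ?thesis by simp
qed

lemma bernpoly_plus_1: "bernpoly n (x + 1) = bernpoly n x + of_nat n * x ^ (n - 1)"
proof -
  let ?g = "\<lambda>k i. of_nat (n choose i) * x ^ i * (of_nat ((n - i) choose k) * bernoulli k)"
  have "bernpoly n (x + 1) =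
      (\<Sum>k\<le>n. \<Sum>i\<in>{i \<in> {..n}. k + i \<le> n}. of_nat (n choose k) * bernoulli k *
        (of_nat ((n - k) choose i) * x ^ i))"
  proof -
    have "{i \<in> {..n}. k + i \<le> n} = {..n - k}" if "k \<le> n" for k using that by auto
    then show ?thesis
      unfolding bernpoly_def binomial_ring
      by (intro sum.cong refl) (simp add: sum_distrib_left mult_ac)
  qed
  also have "\<dots> = (\<Sum>k\<le>n. \<Sum>i\<in>{i \<in> {..n}. k + i \<le> n}. ?g k i)"
    using binomial_mult_swap by (intro sum.cong refl) (simp flip: of_nat_mult)
  also have "\<dots> = (\<Sum>i\<le>n. \<Sum>k\<in>{k \<in> {..n}. k + i \<le> n}. ?g k i)"
    by (rule sum.swap_restrict) auto
  also have "\<dots> = (\<Sum>i\<le>n. of_nat (n choose i) * x ^ i *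
      (bernoulli (n - i) + (if n - i = 1 then 1 else 0)))"
  proof -
    have "{k \<in> {..n}. k + i \<le> n} = {..n - i}" if "i \<le> n" for i using that by auto
    then show ?thesis
      by (intro sum.cong refl) (simp add: sum_distrib_left[symmetric] sum_binomial_bernoulli)
  qed
  also have "\<dots> = (\<Sum>i\<le>n. of_nat (n choose i) * bernoulli (n - i) * x ^ i) +
      (\<Sum>i\<le>n. if i + 1 = n then of_nat n * x ^ (n - 1) else 0)"
    by (subst sum.distrib[symmetric], intro sum.cong) (auto simp: algebra_simps)
  also have "(\<Sum>i\<le>n. of_nat (n choose i) * bernoulli (n - i) * x ^ i) = bernpoly n x"
    unfolding bernpoly_def
    by (rule sum.reindex_bij_witness[where i="\<lambda>i. n - i" and j="\<lambda>i. n - i"])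
      (auto simp flip: binomial_symmetric)
  also have "(\<Sum>i\<le>n. if i + 1 = n then of_nat n * x ^ (n - 1) else 0) = of_nat n * x ^ (n - 1)"
    by (cases n) (simp_all add: sum.delta')
  finally show ?thesis .
qed

lemma sum_powers_bernpoly:
  "of_nat n * (\<Sum>j<m. of_nat j ^ (n - 1)) = bernpoly n (of_nat m) - bernoulli n"
proof (induction m)
  case (Suc m)
  then show ?case using bernpoly_plus_1[of n "of_nat m"] by (simp add: distrib_left add.commute)
qed simp

section \<open>Harmonic sums\<close>

definition gharm :: "nat \<Rightarrow> nat \<Rightarrow> rat" where
  "gharm a n = (\<Sum>k = 1..n. 1 / of_nat k ^ a)"

definition mharm :: "nat \<Rightarrow> nat \<Rightarrow> nat \<Rightarrow> rat" where
  "mharm a b n = (\<Sum>k = 1..n. gharm a (k - 1) / of_nat k ^ b)"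

definition mharm_even :: "nat \<Rightarrow> nat \<Rightarrow> nat \<Rightarrow> rat" where
  "mharm_even a b h = (\<Sum>m = 1..h. gharm a (2 * m - 1) / of_nat (2 * m) ^ b)"

lemma gharm_0 [simp]: "gharm a 0 = 0"
  by (simp add: gharm_def)

lemma gharm_Suc: "gharm a (Suc n) = gharm a n + 1 / of_nat (Suc n) ^ a"
  by (simp add: gharm_def)

lemma gharm_mult_gharm: "gharm a n * gharm b n = mharm a b n + mharm b a n + gharm (a + b) n"
proof (induction n)
  case (Suc n)
  define x :: rat where "x = 1 / of_nat (Suc n)"
  have "gharm c (Suc n) = gharm c n + x ^ c" for c
    by (simp add: x_def gharm_Suc power_one_over)
  moreover have "mharm c d (Suc n) = mharm c d n + gharm c n * x ^ d" for c d
    by (simp add: x_def mharm_def power_one_over)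
  ultimately show ?case
    using Suc by (simp add: algebra_simps power_add)
qed (simp add: mharm_def)

lemma sum_gharm_complement: "(\<Sum>m = 1..n. gharm 1 (n - m) / of_nat m) = 2 * mharm 1 1 n"
proof (induction n)
  case (Suc n)
  have partial_fractions: "1 / (of_nat (Suc n - m) * of_nat m) =
      (1 / of_nat m + 1 / of_nat (Suc n - m)) / (of_nat (Suc n) :: rat)" if "m \<in> {1..n}" for m
  proof -
    have "1 / (y * z) = (1 / z + 1 / y) / (y + z)" if "y > 0" "z > 0" for y z :: rat
    proof -
      have "y \<noteq> 0" "z \<noteq> 0" "y + z \<noteq> 0" using that by auto
      then have "1 / z + 1 / y = (y + z) / (y * z)" by (simp add: field_simps)
      with \<open>y + z \<noteq> 0\<close> show ?thesis by simp
    qed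
    moreover have "of_nat (Suc n - m) + of_nat m = (of_nat (Suc n) :: rat)"
      using that by (simp flip: of_nat_add)
    moreover have "of_nat (Suc n - m) > (0 :: rat)" "of_nat m > (0 :: rat)"
      using that by auto
    ultimately show ?thesis by metis
  qed
  have "(\<Sum>m = 1..Suc n. gharm 1 (Suc n - m) / of_nat m) =
      (\<Sum>m = 1..n. gharm 1 (Suc n - m) / of_nat m)"
    by simp
  also have "\<dots> = (\<Sum>m = 1..n. gharm 1 (n - m) / of_nat m + 1 / (of_nat (Suc n - m) * of_nat m))"
  proof (intro sum.cong refl)
    fix m assume "m \<in> {1..n}"
    then have "Suc n - m = Suc (n - m)" by auto
    then show "gharm 1 (Suc n - m) / of_nat m =
        gharm 1 (n - m) / of_nat m + 1 / (of_nat (Suc n - m) * of_nat m)"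
      by (simp add: gharm_Suc add_divide_distrib)
  qed
  also have "\<dots> = 2 * mharm 1 1 n + (\<Sum>m = 1..n. 1 / (of_nat (Suc n - m) * of_nat m))"
    by (simp only: sum.distrib Suc.IH)
  also have "(\<Sum>m = 1..n. 1 / (of_nat (Suc n - m) * of_nat m)) =
      ((\<Sum>m = 1..n. 1 / of_nat m) + (\<Sum>m = 1..n. 1 / of_nat (Suc n - m))) / (of_nat (Suc n) :: rat)"
    by (simp only: sum.cong[OF refl partial_fractions] sum.distrib flip: sum_divide_distrib)
  also have "(\<Sum>m = 1..n. 1 / of_nat (Suc n - m)) = (\<Sum>m = 1..n. 1 / (of_nat m :: rat))"
    by (rule sum.reindex_bij_witness[where i="\<lambda>m. Suc n - m" and j="\<lambda>m. Suc n - m"]) auto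
  finally show ?case by (simp add: mharm_def gharm_def)
qed (simp add: mharm_def)

lemma sum_pairs_nat: "(\<Sum>k = 1..2 * (h :: nat). f k) = (\<Sum>m = 1..h. f (2 * m - 1) + f (2 * m))"
proof (induction h)
  case (Suc h)
  have "{1..2 * Suc h} = insert (2 * h + 2) (insert (2 * h + 1) {1..2 * h})" by auto
  then show ?case using Suc by (simp add: add_ac)
qed simp

lemma sum_split_parity:
  "(\<Sum>k = 1..2 * (h :: nat). f k) = (\<Sum>m = 1..h. f (2 * m)) + (\<Sum>m = 1..h. f (2 * h + 1 - 2 * m))"
proof -
  have "(\<Sum>m = 1..h. f (2 * m - 1)) = (\<Sum>m = 1..h. f (2 * h + 1 - 2 * m))"
    by (rule sum.reindex_bij_witness[where i="\<lambda>m. h + 1 - m" and j="\<lambda>m. h + 1 - m"])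
      (auto intro!: arg_cong[of _ _ f])
  then show ?thesis unfolding sum_pairs_nat sum.distrib by (simp add: add.commute)
qed

lemma sum_split_halves:
  "(\<Sum>k = 1..2 * (h :: nat). f k) = (\<Sum>m = 1..h. f m) + (\<Sum>m = 1..h. f (2 * h + 1 - m))"
proof -
  have "(\<Sum>k = 1..2 * h. f k) = (\<Sum>m = 1..h. f m) + (\<Sum>k = h + 1..h + h. f k)"
    using sum.ub_add_nat[of 1 h f h] by (simp add: mult_2)
  also have "(\<Sum>k = h + 1..h + h. f k) = (\<Sum>m = 1..h. f (2 * h + 1 - m))"
    by (rule sum.reindex_bij_witness[where i="\<lambda>k. 2 * h + 1 - k" and j="\<lambda>m. 2 * h + 1 - m"])
      auto
  finally show ?thesis .
qed

lemma sum_pairs_even_second: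
  "(\<Sum>(j, k) \<in> {(j, k). 1 \<le> j \<and> j < k \<and> k \<le> 2 * (h :: nat) \<and> even k}. G j k) =
    (\<Sum>m = 1..h. \<Sum>j = 1..2 * m - 1. G j (2 * m))"
proof -
  have "(\<Sum>(j, k) \<in> {(j, k). 1 \<le> j \<and> j < k \<and> k \<le> 2 * h \<and> even k}. G j k) =
      (\<Sum>(m, j) \<in> (SIGMA m:{1..h}. {1..2 * m - 1}). G j (2 * m))"
    by (rule sum.reindex_bij_witness[where i="\<lambda>(m, j). (j, 2 * m)" and j="\<lambda>(j, k). (k div 2, j)"])
      auto
  then show ?thesis by (simp add: sum.Sigma)
qed

section \<open>Congruences between rationals\<close>

definition p_integral :: "nat \<Rightarrow> rat \<Rightarrow> bool" where
  "p_integral p x \<longleftrightarrow> (\<exists>a b. x = of_int a / of_int b \<and> \<not> int p dvd b)"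

definition qcong :: "nat \<Rightarrow> nat \<Rightarrow> rat \<Rightarrow> rat \<Rightarrow> bool" where
  "qcong p n x y \<longleftrightarrow> (\<exists>r. p_integral p r \<and> x - y = of_nat p ^ n * r)"

lemma p_integral_iff_denominator: "p_integral p x \<longleftrightarrow> \<not> int p dvd snd (quotient_of x)"
proof
  assume "p_integral p x"
  then obtain a b where x: "x = of_int a / of_int b" and b: "\<not> int p dvd b"
    unfolding p_integral_def by blast
  obtain n d where q: "quotient_of x = (n, d)" by (cases "quotient_of x")
  have "b \<noteq> 0" using b by auto
  moreover have "d > 0" "coprime n d" using q quotient_of_denom_pos quotient_of_coprime by blast+
  moreover have "of_int n / of_int d = (of_int a / of_int b :: rat)"
    using quotient_of_div[OF q] x by simp
  ultimately have "n * b = a * d"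
    by (simp add: field_simps flip: of_int_mult)
  then have "d dvd b"
    using \<open>coprime n d\<close> by (metis coprime_commute coprime_dvd_mult_right_iff dvd_triv_right)
  then show "\<not> int p dvd snd (quotient_of x)" using q b by (auto dest: dvd_trans)
next
  assume "\<not> int p dvd snd (quotient_of x)"
  then show "p_integral p x"
    unfolding p_integral_def by (metis prod.collapse quotient_of_div)
qed

lemma rat_cong_iff_qcong: "rat_cong x y p \<longleftrightarrow> qcong p 1 x y"
  unfolding rat_cong_def qcong_def p_integral_iff_denominator by auto

lemma qcongI: "p_integral p r \<Longrightarrow> x - y = of_nat p ^ n * r \<Longrightarrow> qcong p n x y"
  unfolding qcong_def by blast

lemma qcongE:
  assumes "qcong p n x y"
  obtains r where "p_integral p r" "x = y + of_nat p ^ n * r"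
  using assms unfolding qcong_def by (metis add.commute diff_add_cancel)

context
  fixes p :: nat
  assumes prime: "prime p"
begin

lemma p_integral_of_int [simp]: "p_integral p (of_int a)"
  unfolding p_integral_def using prime
  by (intro exI[of _ a] exI[of _ 1]) (auto simp: prime_gt_1_nat)

lemma p_integral_of_nat [simp]: "p_integral p (of_nat a)"
  using p_integral_of_int[of "int a"] by simp

lemma p_integral_numeral [simp]: "p_integral p (numeral a)"
  using p_integral_of_nat[of "numeral a"] by simp

lemma p_integral_0 [simp]: "p_integral p 0" and p_integral_1 [simp]: "p_integral p 1"
  using p_integral_of_nat[of 0] p_integral_of_nat[of 1] by simp_all

lemma p_integral_add [simp, intro]:
  assumes "p_integral p x" "p_integral p y"
  shows "p_integral p (x + y)"
proof -
  obtain a b c d where x: "x = of_int a / of_int b" "\<not> int p dvd b"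
    and y: "y = of_int c / of_int d" "\<not> int p dvd d"
    using assms unfolding p_integral_def by blast
  then have "b \<noteq> 0" "d \<noteq> 0" by auto
  then have "x + y = of_int (a * d + c * b) / of_int (b * d)"
    using x y by (simp add: field_simps)
  moreover have "\<not> int p dvd b * d"
    using x y prime by (simp add: prime_dvd_mult_iff)
  ultimately show ?thesis unfolding p_integral_def by blast
qed

lemma p_integral_mult [simp, intro]:
  assumes "p_integral p x" "p_integral p y"
  shows "p_integral p (x * y)"
proof -
  obtain a b c d where x: "x = of_int a / of_int b" "\<not> int p dvd b"
    and y: "y = of_int c / of_int d" "\<not> int p dvd d"
    using assms unfolding p_integral_def by blast
  then have "x * y = of_int (a * c) / of_int (b * d)" by simp
  moreover have "\<not> int p dvd b * d"
    using x y prime by (simp add: prime_dvd_mult_iff)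
  ultimately show ?thesis unfolding p_integral_def by blast
qed

lemma p_integral_uminus [simp, intro]: "p_integral p x \<Longrightarrow> p_integral p (- x)"
  unfolding p_integral_def by (metis minus_divide_left of_int_minus)

lemma p_integral_diff [simp, intro]: "p_integral p x \<Longrightarrow> p_integral p y \<Longrightarrow> p_integral p (x - y)"
  using p_integral_add[of x "- y"] by auto

lemma p_integral_divide [intro]:
  assumes "p_integral p x" "\<not> p dvd n"
  shows "p_integral p (x / of_nat n)"
proof -
  obtain a b where x: "x = of_int a / of_int b" "\<not> int p dvd b"
    using assms unfolding p_integral_def by blast
  then have "x / of_nat n = of_int a / of_int (b * int n)" by simp
  moreover have "\<not> int p dvd b * int n"
    using x assms(2) prime by (simp add: prime_dvd_mult_iff)
  ultimately show ?thesis unfolding p_integral_def by blast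
qed

lemma p_integral_sum [simp, intro]: "(\<And>i. i \<in> A \<Longrightarrow> p_integral p (f i)) \<Longrightarrow> p_integral p (sum f A)"
  by (induction A rule: infinite_finite_induct) auto

lemma p_integral_power [simp, intro]: "p_integral p x \<Longrightarrow> p_integral p (x ^ n)"
  by (induction n) auto

lemma p_integral_divide_power [simp, intro]:
  "p_integral p x \<Longrightarrow> \<not> p dvd k \<Longrightarrow> p_integral p (x / of_nat k ^ n)"
  using p_integral_divide[of x "k ^ n"] prime prime_dvd_power by auto

lemma qcong_refl [simp]: "qcong p n x x"
  by (rule qcongI[of p 0]) simp_all

lemma qcong_sym: "qcong p n x y \<Longrightarrow> qcong p n y x"
proof (elim qcongE)
  fix r assume "p_integral p r" "x = y + of_nat p ^ n * r"
  then show "qcong p n y x" by (intro qcongI[of p "- r"]) auto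
qed

lemma qcong_add: "qcong p n x y \<Longrightarrow> qcong p n u v \<Longrightarrow> qcong p n (x + u) (y + v)"
proof (elim qcongE)
  fix r s assume "p_integral p r" "x = y + of_nat p ^ n * r"
    and "p_integral p s" "u = v + of_nat p ^ n * s"
  then show ?thesis by (intro qcongI[of p "r + s"]) (auto simp: distrib_left)
qed

lemma qcong_trans [trans]: "qcong p n x y \<Longrightarrow> qcong p n y z \<Longrightarrow> qcong p n x z"
proof (elim qcongE)
  fix r s assume "p_integral p r" "x = y + of_nat p ^ n * r"
    and "p_integral p s" "y = z + of_nat p ^ n * s"
  then show ?thesis by (intro qcongI[of p "r + s"]) (auto simp: distrib_left)
qed

lemma qcong_uminus: "qcong p n x y \<Longrightarrow> qcong p n (- x) (- y)"
proof (elim qcongE)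
  fix r assume "p_integral p r" "x = y + of_nat p ^ n * r"
  then show ?thesis by (intro qcongI[of p "- r"]) auto
qed

lemma qcong_diff: "qcong p n x y \<Longrightarrow> qcong p n u v \<Longrightarrow> qcong p n (x - u) (y - v)"
  using qcong_add[of n x y "- u" "- v"] qcong_uminus[of n u v] by simp

lemma qcong_mult_left: "p_integral p c \<Longrightarrow> qcong p n x y \<Longrightarrow> qcong p n (c * x) (c * y)"
proof (elim qcongE)
  fix r assume "p_integral p c" "p_integral p r" "x = y + of_nat p ^ n * r"
  then show ?thesis by (intro qcongI[of p "c * r"]) (auto simp: algebra_simps)
qed

lemma qcong_mult:
  assumes "p_integral p x" "p_integral p v" "qcong p n x y" "qcong p n u v"
  shows "qcong p n (x * u) (y * v)"
proof -
  have "qcong p n (x * u) (x * v)" "qcong p n (v * x) (v * y)"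
    using assms qcong_mult_left by blast+
  then show ?thesis by (auto intro: qcong_trans simp: mult.commute)
qed

lemma qcong_power:
  "p_integral p x \<Longrightarrow> p_integral p y \<Longrightarrow> qcong p n x y \<Longrightarrow> qcong p n (x ^ k) (y ^ k)"
  by (induction k) (auto intro: qcong_mult)

lemma qcong_sum: "(\<And>i. i \<in> A \<Longrightarrow> qcong p n (f i) (g i)) \<Longrightarrow> qcong p n (sum f A) (sum g A)"
  by (induction A rule: infinite_finite_induct) (auto intro: qcong_add)

lemma qcong_divide: "\<not> p dvd c \<Longrightarrow> qcong p n x y \<Longrightarrow> qcong p n (x / of_nat c) (y / of_nat c)"
proof (elim qcongE)
  fix r assume "\<not> p dvd c" "p_integral p r" "x = y + of_nat p ^ n * r"
  then show ?thesis by (intro qcongI[of p "r / of_nat c"]) (auto simp: add_divide_distrib)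
qed

lemma qcong_inverse:
  assumes "x \<noteq> 0" "y \<noteq> 0" "p_integral p (1 / x)" "p_integral p (1 / y)" "qcong p n x y"
  shows "qcong p n (1 / x) (1 / y)"
proof -
  obtain r where r: "p_integral p r" "x = y + of_nat p ^ n * r"
    using assms(5) by (rule qcongE)
  have "1 / x - 1 / y = of_nat p ^ n * (- r * (1 / x) * (1 / y))"
    using assms(1,2) r(2) by (simp add: field_simps)
  moreover have "p_integral p (- r * (1 / x) * (1 / y))"
    using assms r(1) by blast
  ultimately show ?thesis by (intro qcongI)
qed

lemma qcong_mono: "m \<le> n \<Longrightarrow> qcong p n x y \<Longrightarrow> qcong p m x y"
proof (elim qcongE)
  fix r assume "m \<le> n" "p_integral p r" "x = y + of_nat p ^ n * r"
  moreover from this have "of_nat p ^ n = of_nat p ^ m * (of_nat p ^ (n - m) :: rat)"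
    by (simp flip: power_add)
  moreover have "p_integral p (of_nat p ^ (n - m) * r)"
    using \<open>p_integral p r\<close> by (intro p_integral_mult p_integral_power p_integral_of_nat)
  ultimately show ?thesis by (intro qcongI[of p "of_nat p ^ (n - m) * r"]) auto
qed

lemma qcong_divide_p: "qcong p (Suc n) x y \<Longrightarrow> qcong p n (x / of_nat p) (y / of_nat p)"
proof (elim qcongE)
  fix r assume "p_integral p r" "x = y + of_nat p ^ Suc n * r"
  moreover have "of_nat p \<noteq> (0 :: rat)" using prime by auto
  ultimately show ?thesis by (intro qcongI[of p r]) (auto simp: field_simps)
qed

lemma qcong_square_divide_p: "qcong p 1 x 0 \<Longrightarrow> qcong p 1 (x ^ 2 / of_nat p) 0"
proof (elim qcongE)
  fix r assume "p_integral p r" "x = 0 + of_nat p ^ 1 * r"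
  moreover have "of_nat p \<noteq> (0 :: rat)" using prime by auto
  ultimately show ?thesis
    by (intro qcongI[of p "r ^ 2"]) (auto simp: power2_eq_square)
qed

lemma qcong_p_mult_zero: "p_integral p x \<Longrightarrow> qcong p 1 (of_nat p * x) 0"
  by (rule qcongI) auto

lemma qcong_fermat: "\<not> p dvd k \<Longrightarrow> qcong p 1 (of_nat k ^ (p - 1)) 1"
proof -
  assume "\<not> p dvd k"
  then have "[k ^ (p - 1) = 1] (mod p)" by (rule fermat_theorem[OF prime])
  then obtain t where "int (k ^ (p - 1)) - 1 = int p * t"
    by (metis cong_iff_dvd_diff cong_int_iff dvd_def of_nat_1)
  then have "of_nat k ^ (p - 1) - 1 = of_nat p ^ 1 * (of_int t :: rat)"
    by (metis of_int_1 of_int_diff of_int_mult of_int_of_nat_eq of_nat_power power_one_right)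
  then show ?thesis by (rule qcongI[OF p_integral_of_int])
qed

section \<open>Power sums and harmonic sums modulo p\<close>

lemma bernoulli_p_integral: "k + 2 \<le> p \<Longrightarrow> p_integral p (bernoulli k)"
proof (induction k rule: less_induct)
  case (less k)
  show ?case
  proof (cases "k = 0")
    case False
    have "\<not> p dvd k + 1"
      using less.prems by (intro nat_dvd_not_less) auto
    moreover have "p_integral p (\<Sum>i<k. of_nat ((k + 1) choose i) * bernoulli i)"
      using less by (intro p_integral_sum p_integral_mult) auto
    ultimately have "p_integral p (- (\<Sum>i<k. of_nat ((k + 1) choose i) * bernoulli i) / of_nat (k + 1))"
      using prime by (intro p_integral_divide p_integral_uminus)
    with False show ?thesis by (subst bernoulli.simps) simp
  qed simp
qed

lemma sum_powers_qcong_bernoulli: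
  assumes "m + 2 \<le> p"
  shows "qcong p 2 (\<Sum>j<p. of_nat j ^ m) (of_nat p * bernoulli m)"
proof -
  define R where "R = (\<Sum>k<m. of_nat (Suc m choose k) * bernoulli k * of_nat p ^ (m - Suc k))"
  have "of_nat p ^ (Suc m - k) = of_nat p ^ 2 * (of_nat p ^ (m - Suc k) :: rat)" if "k < m" for k
  proof -
    from that have "Suc m - k = 2 + (m - Suc k)" by simp
    then show ?thesis by (simp only: power_add)
  qed
  then have "bernpoly (Suc m) (of_nat p) =
      of_nat p ^ 2 * R + of_nat (Suc m) * (of_nat p * bernoulli m) + bernoulli (Suc m)"
    unfolding bernpoly_def R_def
    by (simp add: sum_distrib_left mult_ac flip: lessThan_Suc_atMost)
  then have "of_nat (Suc m) * (\<Sum>j<p. of_nat j ^ m) =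
      of_nat (Suc m) * (of_nat p * bernoulli m) + of_nat p ^ 2 * R"
    using sum_powers_bernpoly[of "Suc m" p] by simp
  moreover have "p_integral p R"
    unfolding R_def using assms by (intro p_integral_sum p_integral_mult p_integral_power
        p_integral_of_nat bernoulli_p_integral) auto
  ultimately have "qcong p 2 (of_nat (Suc m) * (\<Sum>j<p. of_nat j ^ m))
      (of_nat (Suc m) * (of_nat p * bernoulli m))"
    by (intro qcongI[of p R]) simp_all
  moreover have "\<not> p dvd Suc m"
    using assms by (intro nat_dvd_not_less) auto
  ultimately show ?thesis
    using qcong_divide by fastforce
qed

lemma sum_powers_qcong_0:
  assumes "m + 2 \<le> p"
  shows "qcong p 1 (\<Sum>j<p. of_nat j ^ m) 0"
proof -
  have "qcong p 1 (\<Sum>j<p. of_nat j ^ m) (of_nat p * bernoulli m)"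
    using qcong_mono[of 1 2] sum_powers_qcong_bernoulli[OF assms] by simp
  also have "qcong p 1 \<dots> 0"
    using assms by (intro qcong_p_mult_zero bernoulli_p_integral)
  finally show ?thesis .
qed

lemma inverse_power_qcong:
  assumes "\<not> p dvd k" "a \<le> p - 1"
  shows "qcong p 1 (1 / of_nat k ^ a) (of_nat k ^ (p - 1 - a))"
proof -
  have "qcong p 1 (1 / of_nat k ^ a * of_nat k ^ (p - 1)) (1 / of_nat k ^ a * 1)"
    using assms(1) by (intro qcong_mult_left p_integral_divide_power p_integral_1 qcong_fermat)
  moreover have "1 / of_nat k ^ a * of_nat k ^ (p - 1) = (of_nat k ^ (p - 1 - a) :: rat)"
  proof -
    have "of_nat k ^ (p - 1) = of_nat k ^ (p - 1 - a) * (of_nat k ^ a :: rat)"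
      using assms(2) by (metis le_add_diff_inverse2 power_add)
    then show ?thesis using assms(1) by (cases "k = 0") auto
  qed
  ultimately show ?thesis by (simp add: qcong_sym)
qed

lemma gharm_qcong_0:
  assumes "1 \<le> a" "a + 2 \<le> p"
  shows "qcong p 1 (gharm a (p - 1)) 0"
proof -
  have "qcong p 1 (gharm a (p - 1)) (\<Sum>k = 1..p - 1. of_nat k ^ (p - 1 - a))"
    unfolding gharm_def using assms
    by (intro qcong_sum inverse_power_qcong nat_dvd_not_less) auto
  also have "(\<Sum>k = 1..p - 1. of_nat k ^ (p - 1 - a)) = (\<Sum>k<p. of_nat k ^ (p - 1 - a) :: rat)"
  proof -
    have "{..<p} = insert 0 {1..p - 1}" using prime prime_gt_0_nat by fastforce
    then show ?thesis using assms by simp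
  qed
  also have "qcong p 1 \<dots> 0"
    using assms by (intro sum_powers_qcong_0) auto
  finally show ?thesis .
qed

lemma gharm_p_integral: "n < p \<Longrightarrow> p_integral p (gharm a n)"
  unfolding gharm_def by (intro p_integral_sum p_integral_divide_power nat_dvd_not_less) auto

lemma inverse_power_reflect_qcong:
  assumes "0 < k" "k < p"
  shows "qcong p 1 (1 / of_nat (p - k) ^ a) ((- 1) ^ a / of_nat k ^ a)"
proof -
  have neg: "1 / (- of_nat k) ^ a = (- 1) ^ a / (of_nat k ^ a :: rat)"
    by (cases "even a") simp_all
  have not_dvd: "\<not> p dvd k" "\<not> p dvd (p - k)"
    using assms by (simp_all add: nat_dvd_not_less)
  have "qcong p 1 (of_nat (p - k)) (- of_nat k)"
    using assms by (intro qcongI[of p 1]) (simp_all add: of_nat_diff)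
  then have "qcong p 1 (of_nat (p - k) ^ a) ((- of_nat k) ^ a)"
    by (intro qcong_power) auto
  moreover have "p_integral p (1 / (- of_nat k) ^ a)"
    unfolding neg using not_dvd by (intro p_integral_divide_power p_integral_power) auto
  ultimately have "qcong p 1 (1 / of_nat (p - k) ^ a) (1 / (- of_nat k) ^ a)"
    using assms not_dvd by (intro qcong_inverse p_integral_divide_power) auto
  then show ?thesis unfolding neg .
qed

lemma gharm_reflect_qcong:
  assumes "k < p"
  shows "qcong p 1 (gharm a (p - 1 - k)) ((- 1) ^ a * (gharm a (p - 1) - gharm a k))"
proof -
  have "gharm a (p - 1 - k) = (\<Sum>i = k + 1..p - 1. 1 / of_nat (p - i) ^ a)"
    unfolding gharm_def using assms
    by (intro sum.reindex_bij_witness[where i="\<lambda>i. p - i" and j="\<lambda>i. p - i"]) auto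
  also have "qcong p 1 \<dots> (\<Sum>i = k + 1..p - 1. (- 1) ^ a / of_nat i ^ a)"
    by (intro qcong_sum inverse_power_reflect_qcong) auto
  also have "\<dots> = (- 1) ^ a * (gharm a (p - 1) - gharm a k)"
  proof -
    have "{1..p - 1} = {1..k} \<union> {k + 1..p - 1}" using assms by auto
    then have "gharm a (p - 1) = gharm a k + (\<Sum>i = k + 1..p - 1. 1 / of_nat i ^ a)"
      unfolding gharm_def by (simp add: sum.union_disjoint)
    then show ?thesis by (simp add: sum_distrib_left)
  qed
  finally show ?thesis .
qed

lemma mharm_term_reflect_qcong:
  assumes "odd (a + b)" "1 \<le> a" "a + 2 \<le> p" "0 < k" "k < p"
  shows "qcong p 1 (gharm a (p - k - 1) / of_nat (p - k) ^ b)
    (gharm a (k - 1) / of_nat k ^ b + 1 / of_nat k ^ (a + b))"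
proof -
  have "qcong p 1 (gharm a (p - 1 - k)) ((- 1) ^ a * (gharm a (p - 1) - gharm a k))"
    using assms by (intro gharm_reflect_qcong)
  also have "qcong p 1 \<dots> ((- 1) ^ a * (0 - gharm a k))"
    using assms by (intro qcong_mult_left qcong_diff gharm_qcong_0 qcong_refl
        p_integral_power p_integral_uminus p_integral_1) auto
  finally have reflect_gharm: "qcong p 1 (gharm a (p - 1 - k)) ((- 1) ^ a * (0 - gharm a k))" .
  have "p_integral p (gharm a (p - 1 - k))"
    using assms by (intro gharm_p_integral) auto
  moreover have "p_integral p ((- 1) ^ b / of_nat k ^ b)"
    using assms by (intro p_integral_divide_power p_integral_power p_integral_uminus p_integral_1)
      (simp add: nat_dvd_not_less)
  ultimately have "qcong p 1 (gharm a (p - 1 - k) * (1 / of_nat (p - k) ^ b))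
      ((- 1) ^ a * (0 - gharm a k) * ((- 1) ^ b / of_nat k ^ b))"
    using reflect_gharm inverse_power_reflect_qcong[OF assms(4,5)] by (rule qcong_mult)
  moreover have "(- 1) ^ a * (0 - gharm a k) * ((- 1) ^ b / of_nat k ^ b) =
      gharm a (k - 1) / of_nat k ^ b + 1 / (of_nat k ^ (a + b) :: rat)"
  proof -
    have "(- 1) ^ a * (- 1) ^ b = (- 1 :: rat)"
      using assms(1) by (simp flip: power_add)
    moreover have "gharm a k = gharm a (k - 1) + 1 / of_nat k ^ a"
      using gharm_Suc[of a "k - 1"] assms(4) by simp
    ultimately show ?thesis
      using assms(4) by (simp add: field_simps power_add)
  qed
  ultimately show ?thesis by (simp add: diff_commute)
qed

lemma mharm_1_2_qcong_mharm_1_1: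
  "qcong p 1 (mharm 1 2 (p - 1)) (- 3 * mharm 1 1 (p - 1) / of_nat p)"
proof -
  let ?T = "\<lambda>k. gharm 1 (k - 1) / (of_nat k * of_nat (p - k))"
  have "qcong p 1 (mharm 1 2 (p - 1)) (\<Sum>k = 1..p - 1. - ?T k)"
    unfolding mharm_def
  proof (intro qcong_sum qcongI)
    fix k assume k: "k \<in> {1..p - 1}"
    let ?x = "of_nat k :: rat" and ?y = "of_nat (p - k) :: rat"
    have "?x \<noteq> 0" "?y \<noteq> 0" "?x + ?y = of_nat p"
      using k by (auto simp flip: of_nat_add)
    then show "gharm 1 (k - 1) / ?x ^ 2 - - ?T k =
        of_nat p ^ 1 * (gharm 1 (k - 1) / ?x ^ 2 / ?y)"
      by (simp add: field_simps power2_eq_square)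
    show "p_integral p (gharm 1 (k - 1) / ?x ^ 2 / ?y)"
      using k by (intro p_integral_divide p_integral_divide_power gharm_p_integral)
        (auto simp: nat_dvd_not_less)
  qed
  also have "(\<Sum>k = 1..p - 1. - ?T k) = - 3 * mharm 1 1 (p - 1) / of_nat p"
  proof -
    have "?T k = (gharm 1 (k - 1) / of_nat k + gharm 1 (k - 1) / of_nat (p - k)) / of_nat p"
      if "k \<in> {1..p - 1}" for k
    proof -
      have "of_nat k + of_nat (p - k) = (of_nat p :: rat)" "of_nat k \<noteq> (0 :: rat)"
        "of_nat (p - k) \<noteq> (0 :: rat)"
        using that by (auto simp flip: of_nat_add)
      then show ?thesis by (simp add: field_simps)
    qed
    then have "(\<Sum>k = 1..p - 1. ?T k) =
        (\<Sum>k = 1..p - 1. (gharm 1 (k - 1) / of_nat k + gharm 1 (k - 1) / of_nat (p - k)) / of_nat p)"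
      by (rule sum.cong[OF refl])
    also have "\<dots> =
        (mharm 1 1 (p - 1) + (\<Sum>k = 1..p - 1. gharm 1 (k - 1) / of_nat (p - k))) / of_nat p"
      by (simp only: mharm_def power_one_right sum.distrib flip: sum_divide_distrib)
    also have "(\<Sum>k = 1..p - 1. gharm 1 (k - 1) / of_nat (p - k)) =
        (\<Sum>m = 1..p - 1. gharm 1 (p - 1 - m) / of_nat m)"
      by (rule sum.reindex_bij_witness[where i="\<lambda>m. p - m" and j="\<lambda>k. p - k"]) auto
    also have "\<dots> = 2 * mharm 1 1 (p - 1)"
      by (rule sum_gharm_complement)
    finally show ?thesis by (simp add: sum_negf)
  qed
  finally show ?thesis .
qed

section \<open>Expansions modulo p^2 and the doubling argument\<close>

lemma inverse_square_reflect_qcong: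
  assumes "0 < k" "k < p"
  shows "qcong p 2 (1 / of_nat (p - k) ^ 2) (1 / of_nat k ^ 2 + of_nat p * (2 / of_nat k ^ 3))"
proof -
  have identity: "1 / y ^ 2 - (1 / x ^ 2 + (x + y) * (2 / x ^ 3)) =
      (x + y) ^ 2 * ((x - 2 * y) * (1 / x ^ 3) * (1 / y ^ 2))" if "x \<noteq> 0" "y \<noteq> 0" for x y :: rat
    using that by (simp add: field_simps power2_eq_square power3_eq_cube)
  have "of_nat k + of_nat (p - k) = (of_nat p :: rat)"
    using assms by (simp flip: of_nat_add)
  moreover have "p_integral p ((of_nat k - 2 * of_nat (p - k)) * (1 / of_nat k ^ 3) * (1 / of_nat (p - k) ^ 2))"
    using assms by (intro p_integral_mult p_integral_diff p_integral_divide_power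
        p_integral_of_nat p_integral_numeral p_integral_1) (simp_all add: nat_dvd_not_less)
  ultimately show ?thesis
    using identity[of "of_nat k" "of_nat (p - k)"] assms by (intro qcongI) auto
qed

lemma power_binomial_qcong:
  assumes "p_integral p x" "p_integral p y"
  shows "qcong p 2 ((x + of_nat p * y) ^ Suc e) (x ^ Suc e + of_nat (Suc e) * of_nat p * y * x ^ e)"
proof (induction e)
  case (Suc e)
  then obtain r where r: "p_integral p r"
    "(x + of_nat p * y) ^ Suc e = x ^ Suc e + of_nat (Suc e) * of_nat p * y * x ^ e + of_nat p ^ 2 * r"
    by (elim qcongE)
  define s where "s = x * r + of_nat (Suc e) * y * y * x ^ e + of_nat p * y * r"
  have "(x + of_nat p * y) ^ Suc (Suc e) -
      (x ^ Suc (Suc e) + of_nat (Suc (Suc e)) * of_nat p * y * x ^ Suc e) = of_nat p ^ 2 * s"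
    unfolding power_Suc[of "x + of_nat p * y" "Suc e"] r(2) s_def
    by (simp add: algebra_simps power2_eq_square)
  moreover have "p_integral p s"
    unfolding s_def using assms r(1) by (intro p_integral_add p_integral_mult p_integral_power) auto
  ultimately show ?case by (intro qcongI)
qed simp

lemma power_reflect_qcong:
  assumes "even e" "k \<le> p"
  shows "qcong p 2 (of_nat (p - k) ^ e) (of_nat k ^ e - of_nat e * of_nat p * of_nat k ^ (e - 1))"
proof (cases e)
  case (Suc e')
  have "qcong p 2 ((- of_nat k + of_nat p * 1) ^ Suc e')
      ((- of_nat k) ^ Suc e' + of_nat (Suc e') * of_nat p * 1 * (- of_nat k) ^ e')"
    by (intro power_binomial_qcong) auto
  moreover have "of_nat (p - k) = - of_nat k + of_nat p * (1 :: rat)"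
    using assms by (simp add: of_nat_diff)
  moreover have "even (Suc e')" "odd e'" using assms Suc by auto
  ultimately show ?thesis using Suc by simp
qed simp

context
  fixes h :: nat
  assumes p_eq: "p = 2 * h + 1"
begin

lemma not_dvd_power_2: "\<not> p dvd 2 ^ k"
proof
  assume "p dvd 2 ^ k"
  then have "p dvd 2" using prime prime_dvd_power by blast
  then have "p \<le> 2" by (simp add: dvd_imp_le)
  with prime p_eq show False using prime_ge_2_nat[of p] by simp
qed

lemma doubling_qcong:
  fixes f g :: "nat \<Rightarrow> rat"
  assumes c: "p_integral p c"
    and f_double: "\<And>m. f (2 * m) = c * f m"
    and g_double: "\<And>m. g (2 * m) = d * g m"
    and reflect: "\<And>k. 0 < k \<Longrightarrow> k < p \<Longrightarrow> qcong p 2 (f (p - k)) (f k + of_nat p * g k)"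
  shows "qcong p 2 ((1 - c) * (\<Sum>k = 1..p - 1. f k)) (of_nat p * (d - c) * (\<Sum>m = 1..h. g m))"
proof -
  define S where "S = (\<Sum>k = 1..p - 1. f k)"
  define F where "F = (\<Sum>m = 1..h. f m)"
  define G where "G = (\<Sum>m = 1..h. g m)"
  have p_minus_1: "p - 1 = 2 * h" using p_eq by simp
  have "S = F + (\<Sum>m = 1..h. f (p - m))"
    unfolding S_def F_def p_minus_1 sum_split_halves p_eq[symmetric] ..
  also have "qcong p 2 \<dots> (F + (\<Sum>m = 1..h. f m + of_nat p * g m))"
    using p_eq by (intro qcong_add qcong_refl qcong_sum reflect) auto
  also have "\<dots> = 2 * F + of_nat p * G"
    by (simp add: F_def G_def sum.distrib sum_distrib_left)
  finally have halves: "qcong p 2 S (2 * F + of_nat p * G)" .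
  have "S = c * F + (\<Sum>m = 1..h. f (p - 2 * m))"
    unfolding S_def F_def p_minus_1 sum_split_parity p_eq[symmetric]
    by (simp add: f_double sum_distrib_left)
  also have "qcong p 2 \<dots> (c * F + (\<Sum>m = 1..h. f (2 * m) + of_nat p * g (2 * m)))"
    using p_eq by (intro qcong_add qcong_refl qcong_sum reflect) auto
  also have "\<dots> = c * F + (c * F + of_nat p * (d * G))"
    by (simp add: F_def G_def f_double g_double sum.distrib sum_distrib_left)
  also have "\<dots> = 2 * c * F + of_nat p * d * G"
    by (simp add: algebra_simps)
  finally have parity: "qcong p 2 S (2 * c * F + of_nat p * d * G)" .
  have "qcong p 2 (S - c * S) (2 * c * F + of_nat p * d * G - c * (2 * F + of_nat p * G))"
    using parity halves c by (intro qcong_diff qcong_mult_left)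
  then show ?thesis
    unfolding S_def[symmetric] G_def[symmetric] by (simp add: algebra_simps)
qed

lemma gharm_2_qcong: "qcong p 1 (3 * gharm 2 (p - 1) / of_nat p) (- gharm 3 h)"
proof -
  have "qcong p 2 ((1 - 1 / 4) * (\<Sum>k = 1..p - 1. 1 / of_nat k ^ 2))
      (of_nat p * (1 / 8 - 1 / 4) * (\<Sum>m = 1..h. 2 / of_nat m ^ 3))"
    using p_integral_divide_power[OF p_integral_1 not_dvd_power_2[of 1], of 2]
      inverse_square_reflect_qcong
    by (intro doubling_qcong) (simp_all add: power_mult_distrib)
  then have "qcong p 2 (4 * ((1 - 1 / 4) * (\<Sum>k = 1..p - 1. 1 / of_nat k ^ 2)))
      (4 * (of_nat p * (1 / 8 - 1 / 4) * (\<Sum>m = 1..h. 2 / of_nat m ^ 3)))"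
    by (intro qcong_mult_left) simp_all
  moreover have "(\<Sum>m = 1..h. 2 / of_nat m ^ 3) = 2 * gharm 3 h"
    by (simp add: gharm_def sum_distrib_left)
  ultimately have "qcong p 2 (3 * gharm 2 (p - 1)) (of_nat p * - gharm 3 h)"
    by (simp add: gharm_def)
  from qcong_divide_p[of 1, unfolded Suc_1, OF this] show ?thesis
    using prime by simp
qed

lemma mharm_even_qcong:
  assumes "odd (a + b)" "1 \<le> a" "a + 2 \<le> p"
  shows "qcong p 1 (2 * mharm_even a b h) (mharm a b (p - 1) - gharm (a + b) h / 2 ^ (a + b))"
proof -
  define F where "F k = gharm a (k - 1) / of_nat k ^ b" for k
  have "mharm a b (p - 1) = (\<Sum>k = 1..2 * h. F k)"
    by (simp add: mharm_def F_def p_eq)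
  also have "\<dots> = mharm_even a b h + (\<Sum>m = 1..h. F (p - 2 * m))"
    unfolding sum_split_parity p_eq[symmetric] by (simp add: mharm_even_def F_def)
  also have "qcong p 1 \<dots> (mharm_even a b h + (\<Sum>m = 1..h. F (2 * m) + 1 / of_nat (2 * m) ^ (a + b)))"
    unfolding F_def using assms p_eq
    by (intro qcong_add qcong_refl qcong_sum mharm_term_reflect_qcong) auto
  also have "\<dots> = 2 * mharm_even a b h + gharm (a + b) h / 2 ^ (a + b)"
    by (simp add: F_def mharm_even_def gharm_def sum.distrib power_mult_distrib sum_divide_distrib
        mult.commute)
  finally have "qcong p 1 (mharm a b (p - 1) - gharm (a + b) h / 2 ^ (a + b))
      (2 * mharm_even a b h + gharm (a + b) h / 2 ^ (a + b) - gharm (a + b) h / 2 ^ (a + b))"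
    by (intro qcong_diff qcong_refl)
  then show ?thesis by (simp add: qcong_sym)
qed

context
  assumes p_ge_5: "5 \<le> p"
begin

lemma sum_half_powers_qcong_bernoulli:
  "qcong p 1 (\<Sum>m = 1..h. of_nat m ^ (p - 4)) (- 2 * bernoulli (p - 3))"
proof -
  define c :: rat where "c = 2 ^ (p - 3)"
  define d :: rat where "d = 2 ^ (p - 4)"
  define P :: rat where "P = (\<Sum>k = 1..p - 1. of_nat k ^ (p - 3))"
  define Hf :: rat where "Hf = (\<Sum>m = 1..h. of_nat m ^ (p - 4))"
  define B where "B = bernoulli (p - 3)"
  have "qcong p 2 ((1 - c) * P)
      (of_nat p * (d - c) * (\<Sum>m = 1..h. - of_nat (p - 3) * of_nat m ^ (p - 4)))"
    unfolding P_def
  proof (rule doubling_qcong)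
    fix k :: nat assume "0 < k" "k < p"
    moreover have "even (p - 3)" "p - 3 - 1 = p - 4" using p_eq p_ge_5 by auto
    ultimately show "qcong p 2 (of_nat (p - k) ^ (p - 3))
        (of_nat k ^ (p - 3) + of_nat p * (- of_nat (p - 3) * of_nat k ^ (p - 4)))"
      using power_reflect_qcong[of "p - 3" k] by (simp add: algebra_simps)
  qed (simp_all add: c_def d_def power_mult_distrib p_integral_power)
  moreover have "(\<Sum>m = 1..h. - of_nat (p - 3) * of_nat m ^ (p - 4)) = - of_nat (p - 3) * Hf"
    by (simp add: Hf_def sum_distrib_left)
  ultimately have "qcong p 2 ((1 - c) * P) (of_nat p * ((d - c) * - of_nat (p - 3) * Hf))"
    by (simp add: mult.assoc)
  from qcong_divide_p[of 1, unfolded Suc_1, OF this]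
  have doubling: "qcong p 1 ((1 - c) * (P / of_nat p)) ((d - c) * - of_nat (p - 3) * Hf)"
    using prime by simp
  have "{..<p} = insert 0 {1..p - 1}" using p_ge_5 by auto
  then have "(\<Sum>j<p. of_nat j ^ (p - 3)) = P"
    using p_ge_5 by (simp add: P_def)
  then have P: "qcong p 1 (P / of_nat p) B"
    using qcong_divide_p[of 1, unfolded Suc_1, OF sum_powers_qcong_bernoulli[of "p - 3"]] p_ge_5 prime
    by (simp add: B_def)
  have c: "qcong p 1 c (1 / 4)" and d: "qcong p 1 d (1 / 8)"
    using inverse_power_qcong[OF not_dvd_power_2[of 1], of 2]
      inverse_power_qcong[OF not_dvd_power_2[of 1], of 3] p_ge_5
    by (auto simp: c_def d_def qcong_sym simp del: One_nat_def)
  have "qcong p 1 (- of_nat (p - 3)) 3"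
    using p_ge_5 by (intro qcongI[of p "- 1"]) (simp_all add: of_nat_diff p_integral_uminus)
  then have factor: "qcong p 1 ((d - c) * - of_nat (p - 3)) ((1 / 8 - 1 / 4) * 3)"
    using c d by (intro qcong_mult qcong_diff) (auto simp: c_def d_def p_integral_diff p_integral_power)
  have "qcong p 1 ((d - c) * - of_nat (p - 3) * Hf) ((1 / 8 - 1 / 4) * 3 * Hf)"
    by (rule qcong_mult[OF _ _ factor qcong_refl]) (simp_all add: Hf_def c_def d_def)
  moreover have "qcong p 1 ((1 - c) * (P / of_nat p)) ((1 - 1 / 4) * B)"
    using c P p_ge_5 by (intro qcong_mult qcong_diff qcong_refl)
      (auto simp: c_def B_def intro: bernoulli_p_integral)
  ultimately have "qcong p 1 ((1 - 1 / 4) * B) ((1 / 8 - 1 / 4) * 3 * Hf)"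
    using doubling by (meson qcong_sym qcong_trans)
  then have "qcong p 1 (- 8 * ((1 - 1 / 4) * B)) (- 8 * ((1 / 8 - 1 / 4) * 3 * Hf))"
    by (intro qcong_mult_left) auto
  then have "qcong p 1 (3 * Hf / of_nat 3) (3 * (- 2 * B) / of_nat 3)"
    using p_ge_5 by (intro qcong_divide) (auto simp: qcong_sym nat_dvd_not_less)
  then show ?thesis by (simp add: Hf_def B_def)
qed

lemma gharm_3_half_qcong: "qcong p 1 (gharm 3 h) (- 2 * bernoulli (p - 3))"
proof -
  have "qcong p 1 (gharm 3 h) (\<Sum>m = 1..h. of_nat m ^ (p - 1 - 3))"
    unfolding gharm_def using p_eq p_ge_5
    by (intro qcong_sum inverse_power_qcong nat_dvd_not_less) auto
  then show ?thesis
    using qcong_trans sum_half_powers_qcong_bernoulli by (simp add: diff_diff_left)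
qed

lemma mharm_1_2_qcong: "qcong p 1 (2 * mharm 1 2 (p - 1)) (- gharm 3 h)"
proof -
  define H1 where "H1 = gharm 1 (p - 1)"
  define H2 where "H2 = gharm 2 (p - 1)"
  have square: "H1 ^ 2 = H2 + 2 * mharm 1 1 (p - 1)"
    using gharm_mult_gharm[of 1 "p - 1" 1] by (simp add: H1_def H2_def power2_eq_square del: One_nat_def)
  have "qcong p 1 (2 * mharm 1 2 (p - 1)) (2 * (- 3 * mharm 1 1 (p - 1) / of_nat p))"
    by (intro qcong_mult_left mharm_1_2_qcong_mharm_1_1) simp
  also have "2 * (- 3 * mharm 1 1 (p - 1) / of_nat p) = - 3 * (H1 ^ 2 / of_nat p) + 3 * H2 / of_nat p"
    using square prime by (simp add: field_simps)
  also have "qcong p 1 \<dots> (- 3 * 0 + - gharm 3 h)"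
    unfolding H1_def H2_def using p_ge_5
    by (intro qcong_add qcong_mult_left qcong_square_divide_p gharm_qcong_0 gharm_2_qcong) auto
  finally show ?thesis by simp
qed

lemma mharm_2_1_qcong: "qcong p 1 (2 * mharm 2 1 (p - 1)) (gharm 3 h)"
proof -
  have "2 * mharm 2 1 (p - 1) =
      2 * (gharm 1 (p - 1) * gharm 2 (p - 1)) - 2 * mharm 1 2 (p - 1) - 2 * gharm 3 (p - 1)"
    using gharm_mult_gharm[of 1 "p - 1" 2] by (simp del: One_nat_def)
  also have "qcong p 1 \<dots> (2 * (0 * gharm 2 (p - 1)) - - gharm 3 h - 2 * 0)"
    using p_ge_5 by (intro qcong_diff qcong_mult_left qcong_mult mharm_1_2_qcong gharm_qcong_0
        qcong_refl gharm_p_integral) auto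
  finally show ?thesis by simp
qed

lemma mharm_even_1_2_qcong: "qcong p 1 (mharm_even 1 2 h) (5 / 8 * bernoulli (p - 3))"
proof -
  have "qcong p 1 (2 * mharm_even 1 2 h) (mharm 1 2 (p - 1) - gharm 3 h / 2 ^ 3)"
    using mharm_even_qcong[of 1 2] p_ge_5 by (simp del: One_nat_def)
  then have "qcong p 1 (8 * (2 * mharm_even 1 2 h)) (8 * (mharm 1 2 (p - 1) - gharm 3 h / 2 ^ 3))"
    by (intro qcong_mult_left) simp
  also have "8 * (mharm 1 2 (p - 1) - gharm 3 h / 2 ^ 3) = 4 * (2 * mharm 1 2 (p - 1)) - gharm 3 h"
    by simp
  also have "qcong p 1 \<dots> (4 * - gharm 3 h - gharm 3 h)"
    by (intro qcong_diff qcong_mult_left mharm_1_2_qcong qcong_refl) simp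
  also have "\<dots> = - 5 * gharm 3 h"
    by simp
  also have "qcong p 1 \<dots> (- 5 * (- 2 * bernoulli (p - 3)))"
    by (intro qcong_mult_left gharm_3_half_qcong p_integral_uminus p_integral_numeral)
  finally have "qcong p 1 (16 * mharm_even 1 2 h / of_nat (2 ^ 4)) (10 * bernoulli (p - 3) / of_nat (2 ^ 4))"
    using not_dvd_power_2[of 4] by (intro qcong_divide) simp_all
  then show ?thesis by simp
qed

lemma mharm_even_2_1_qcong: "qcong p 1 (mharm_even 2 1 h) (- 3 / 8 * bernoulli (p - 3))"
proof -
  have "qcong p 1 (2 * mharm_even 2 1 h) (mharm 2 1 (p - 1) - gharm 3 h / 2 ^ 3)"
    using mharm_even_qcong[of 2 1] p_ge_5 by (simp del: One_nat_def)
  then have "qcong p 1 (8 * (2 * mharm_even 2 1 h)) (8 * (mharm 2 1 (p - 1) - gharm 3 h / 2 ^ 3))"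
    by (intro qcong_mult_left) simp
  also have "8 * (mharm 2 1 (p - 1) - gharm 3 h / 2 ^ 3) = 4 * (2 * mharm 2 1 (p - 1)) - gharm 3 h"
    by simp
  also have "qcong p 1 \<dots> (4 * gharm 3 h - gharm 3 h)"
    by (intro qcong_diff qcong_mult_left mharm_2_1_qcong qcong_refl) simp
  also have "\<dots> = 3 * gharm 3 h"
    by simp
  also have "qcong p 1 \<dots> (3 * (- 2 * bernoulli (p - 3)))"
    by (intro qcong_mult_left gharm_3_half_qcong p_integral_uminus p_integral_numeral)
  finally have "qcong p 1 (16 * mharm_even 2 1 h / of_nat (2 ^ 4)) (- 6 * bernoulli (p - 3) / of_nat (2 ^ 4))"
    using not_dvd_power_2[of 4] by (intro qcong_divide) simp_all
  then show ?thesis by simp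
qed

end

end

end

theorem lemma2p2:
  fixes p :: nat
  assumes "prime p" and "p \<ge> 5"
  shows "rat_cong
           (\<Sum>(j, k) \<in> {(j, k). 1 \<le> j \<and> j < k \<and> k \<le> p - 1 \<and> even k}.
              1 / (of_nat j * of_nat k ^ 2))
           (5 / 8 * bernoulli (p - 3)) p \<and>
         rat_cong
           (\<Sum>(j, k) \<in> {(j, k). 1 \<le> j \<and> j < k \<and> k \<le> p - 1 \<and> even k}.
              1 / (of_nat j ^ 2 * of_nat k))
           (- 3 / 8 * bernoulli (p - 3)) p"
proof -
  have "odd p"
    using assms by (intro prime_odd_nat) auto
  then obtain h where p: "p = 2 * h + 1" by (rule oddE)
  then have "p - 1 = 2 * h" by simp
  then have sum_eq: "(\<Sum>(j, k) \<in> {(j, k). 1 \<le> j \<and> j < k \<and> k \<le> p - 1 \<and> even k}.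
      1 / (of_nat j ^ a * of_nat k ^ b)) = mharm_even a b h" for a b
    unfolding mharm_even_def gharm_def sum_divide_distrib divide_divide_eq_left
    by (simp only: sum_pairs_even_second)
  show ?thesis
    unfolding rat_cong_iff_qcong
    using sum_eq[of 1 2] sum_eq[of 2 1] mharm_even_1_2_qcong[OF assms(1) p assms(2)]
      mharm_even_2_1_qcong[OF assms(1) p assms(2)]
    by simp
qed

end
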